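(* A sequence $X\in2^\omega$ is computable if and only if there exists a left-c.e. semi-measure $\rho$ such that $X$ is an atom of $\overline\rho$, i.e., $\lim_n\overline\rho(X{\upharpoonright}n)>0$.
   Context: $2^{<\omega}$ is the set of finite binary strings, $\varepsilon$ the empty string, $X{\upharpoonright}n$ the first $n$ bits of $X$. A semi-measure is $\rho:2^{<\omega}\to[0,1]$ with $\rho(\varepsilon)=1$ and $\rho(\sigma)\ge\rho(\sigma0)+\rho(\sigma1)$; left-c.e. means its values are uniformly approximable from below by computable non-decreasing rational sequences. $\overline\rho(\sigma)=\inf_{n\ge|\sigma|}\sum_{\tau\succeq\sigma,\,|\tau|=n}\rho(\tau)$, which defines a measure on $2^\omega$; $X$ is an atom of $\overline\rho$ if $\overline\rho(\{X\})>0$. *)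

theory Defs
  imports Complex_Main
begin

datatype recf = Z | S | Proj nat | Comp recf "recf list" | Prec recf recf | Mn recf

inductive eval :: "recf \<Rightarrow> nat list \<Rightarrow> nat \<Rightarrow> bool" where
  eval_Z: "eval Z xs 0"
| eval_S: "eval S (x # xs) (Suc x)"
| eval_Proj: "i < length xs \<Longrightarrow> eval (Proj i) xs (xs ! i)"
| eval_Comp: "list_all2 (\<lambda>g y. eval g xs y) gs ys \<Longrightarrow> eval f ys z \<Longrightarrow> eval (Comp f gs) xs z"
| eval_Prec0: "eval g xs y \<Longrightarrow> eval (Prec g h) (0 # xs) y"
| eval_PrecS: "eval (Prec g h) (n # xs) y \<Longrightarrow> eval h (n # y # xs) z \<Longrightarrow>
                 eval (Prec g h) (Suc n # xs) z"
| eval_Mn: "eval f (y # xs) 0 \<Longrightarrow> (\<forall>z<y. \<exists>v. v > 0 \<and> eval f (z # xs) v) \<Longrightarrow>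
              eval (Mn f) xs y"

definition computable1 :: "(nat \<Rightarrow> nat) \<Rightarrow> bool" where
  "computable1 h \<longleftrightarrow> (\<exists>f. \<forall>n. eval f [n] (h n))"

definition computable2 :: "(nat \<Rightarrow> nat \<Rightarrow> nat) \<Rightarrow> bool" where
  "computable2 h \<longleftrightarrow> (\<exists>f. \<forall>m n. eval f [m, n] (h m n))"

definition computable_seq :: "(nat \<Rightarrow> bool) \<Rightarrow> bool" where
  "computable_seq X \<longleftrightarrow> computable1 (\<lambda>n. if X n then 1 else 0)"

text \<open>Standard bijective coding of finite binary strings by natural numbers.\<close>
fun code_str :: "bool list \<Rightarrow> nat" where
  "code_str [] = 0"
| "code_str (b # bs) = 2 * code_str bs + (if b then 2 else 1)"

definition restr :: "(nat \<Rightarrow> bool) \<Rightarrow> nat \<Rightarrow> bool list" where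
  "restr X n = map X [0..<n]"

definition semimeasure :: "(bool list \<Rightarrow> real) \<Rightarrow> bool" where
  "semimeasure \<rho> \<longleftrightarrow> (\<forall>\<sigma>. 0 \<le> \<rho> \<sigma> \<and> \<rho> \<sigma> \<le> 1) \<and> \<rho> [] = 1 \<and>
     (\<forall>\<sigma>. \<rho> \<sigma> \<ge> \<rho> (\<sigma> @ [False]) + \<rho> (\<sigma> @ [True]))"

definition left_ce :: "(bool list \<Rightarrow> real) \<Rightarrow> bool" where
  "left_ce \<rho> \<longleftrightarrow> (\<exists>num den. computable2 num \<and> computable2 den \<and>
     (\<forall>\<sigma>. let q = (\<lambda>s. real (num (code_str \<sigma>) s) / real (den (code_str \<sigma>) s + 1)) in
        mono q \<and> q \<longlonglongrightarrow> \<rho> \<sigma>))"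

definition rho_bar :: "(bool list \<Rightarrow> real) \<Rightarrow> bool list \<Rightarrow> real" where
  "rho_bar \<rho> \<sigma> = (INF n\<in>{length \<sigma>..}.
      \<Sum>\<tau>\<in>{\<tau>. length \<tau> = n \<and> take (length \<sigma>) \<tau> = \<sigma>}. \<rho> \<tau>)"

end

theory Submission
  imports Defs
begin

text \<open>A computable sequence X is an atom of its own point mass, a computable semi-measure.
Conversely, suppose \<open>\<rho>\<close>(X\<restriction>n) tends to c > 0 and fix a rational q with c/2 < q < c.
From some N on, \<open>\<rho>\<close>(X\<restriction>k) exceeds q, and the total weight of the extensions of X\<restriction>N of some
length m is below 2q. Since this total weight does not increase with the length, from length m on
X\<restriction>k is the only extension of X\<restriction>N of weight above q. Hence X(j) is computed by enumerating
\<open>\<rho>\<close> from below until an extension of X\<restriction>N of length j + m + 1 is seen to weigh more than q,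
and reading off its j-th bit.\<close>

section \<open>Total recursive functions and decidable predicates\<close>

definition computable :: "nat \<Rightarrow> (nat list \<Rightarrow> nat) \<Rightarrow> bool" where
  "computable n h \<longleftrightarrow> (\<exists>f. \<forall>xs. length xs = n \<longrightarrow> eval f xs (h xs))"

lemma computable_cong:
  "computable n f \<Longrightarrow> (\<And>xs. length xs = n \<Longrightarrow> f xs = g xs) \<Longrightarrow> computable n g"
  unfolding computable_def by metis

lemma computable_zero: "computable n (\<lambda>_. 0)"
  unfolding computable_def by (auto intro: eval_Z)

lemma computable_Suc:
  assumes "computable n f"
  shows "computable n (\<lambda>xs. Suc (f xs))"
proof -
  obtain ff where ff: "\<And>xs. length xs = n \<Longrightarrow> eval ff xs (f xs)"
    using assms unfolding computable_def by auto
  have "eval (Comp S [ff]) xs (Suc (f xs))" if "length xs = n" for xs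
    using ff[OF that] by (auto intro!: eval_Comp eval_S)
  then show ?thesis unfolding computable_def by blast
qed

lemma computable_nth: "i < n \<Longrightarrow> computable n (\<lambda>xs. xs ! i)"
  unfolding computable_def by (auto intro: eval_Proj)

lemma computable_comp:
  assumes "computable (length hs) g" and "\<And>h. h \<in> set hs \<Longrightarrow> computable n h"
  shows "computable n (\<lambda>xs. g (map (\<lambda>h. h xs) hs))"
proof -
  obtain fg where fg: "\<And>ys. length ys = length hs \<Longrightarrow> eval fg ys (g ys)"
    using assms(1) unfolding computable_def by auto
  obtain F where F: "\<And>h xs. h \<in> set hs \<Longrightarrow> length xs = n \<Longrightarrow> eval (F h) xs (h xs)"
    using assms(2) unfolding computable_def by metis
  have "eval (Comp fg (map F hs)) xs (g (map (\<lambda>h. h xs) hs))" if "length xs = n" for xs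
    by (rule eval_Comp[OF _ fg]) (use F that in \<open>auto simp: list_all2_conv_all_nth\<close>)
  then show ?thesis unfolding computable_def by blast
qed

lemma computable_primrec:
  assumes "computable n g" and "computable (Suc (Suc n)) h"
    and "\<And>xs. F (0 # xs) = g xs" and "\<And>k xs. F (Suc k # xs) = h (k # F (k # xs) # xs)"
  shows "computable (Suc n) F"
proof -
  obtain fg where fg: "\<And>ys. length ys = n \<Longrightarrow> eval fg ys (g ys)"
    using assms(1) unfolding computable_def by auto
  obtain fh where fh: "\<And>ys. length ys = Suc (Suc n) \<Longrightarrow> eval fh ys (h ys)"
    using assms(2) unfolding computable_def by auto
  have "eval (Prec fg fh) (k # xs) (F (k # xs))" if "length xs = n" for k xs
  proof (induction k)
    case 0
    then show ?case using fg that assms(3) by (auto intro: eval_Prec0)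
  next
    case (Suc k)
    then show ?case using fh that assms(4) by (auto intro: eval_PrecS)
  qed
  then show ?thesis
    unfolding computable_def by (metis length_Suc_conv)
qed

lemma computable_Least_zero:
  assumes "computable (Suc n) f" and "\<And>xs. length xs = n \<Longrightarrow> \<exists>y. f (y # xs) = 0"
  shows "computable n (\<lambda>xs. LEAST y. f (y # xs) = 0)"
proof -
  obtain ff where ff: "\<And>ys. length ys = Suc n \<Longrightarrow> eval ff ys (f ys)"
    using assms(1) unfolding computable_def by auto
  have "eval (Mn ff) xs (LEAST y. f (y # xs) = 0)" if "length xs = n" for xs
  proof (rule eval_Mn)
    show "eval ff ((LEAST y. f (y # xs) = 0) # xs) 0"
      using ff[of "(LEAST y. f (y # xs) = 0) # xs"] LeastI_ex[OF assms(2)[OF that]] that by simp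
    show "\<forall>z<(LEAST y. f (y # xs) = 0). \<exists>v>0. eval ff (z # xs) v"
    proof (intro allI impI)
      fix z assume "z < (LEAST y. f (y # xs) = 0)"
      then have "f (z # xs) \<noteq> 0" by (rule not_less_Least)
      then show "\<exists>v>0. eval ff (z # xs) v" using ff[of "z # xs"] that by auto
    qed
  qed
  then show ?thesis unfolding computable_def by blast
qed

lemma computable_comp1: "computable 1 g \<Longrightarrow> computable n a \<Longrightarrow> computable n (\<lambda>xs. g [a xs])"
  using computable_comp[of "[a]" g n] by auto

lemma computable_comp2:
  "computable 2 g \<Longrightarrow> computable n a \<Longrightarrow> computable n b \<Longrightarrow> computable n (\<lambda>xs. g [a xs, b xs])"
  using computable_comp[of "[a, b]" g n] by (auto simp: numeral_2_eq_2)

lemma computable_const: "computable n (\<lambda>_. k)"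
  by (induction k) (auto intro: computable_zero computable_Suc)

lemma computable_add:
  assumes "computable n f" and "computable n g"
  shows "computable n (\<lambda>xs. f xs + g xs)"
proof -
  have "computable (Suc 1) (\<lambda>xs. xs ! 0 + xs ! 1)"
    by (rule computable_primrec[where g = "\<lambda>ys. ys ! 0" and h = "\<lambda>ys. Suc (ys ! 1)"])
      (auto intro: computable_nth computable_Suc)
  from computable_comp2[OF this[unfolded Suc_1] assms] show ?thesis by simp
qed

lemma computable_diff:
  assumes "computable n f" and "computable n g"
  shows "computable n (\<lambda>xs. f xs - g xs)"
proof -
  have pred: "computable 1 (\<lambda>xs. xs ! 0 - 1)"
    using computable_primrec[where n = 0 and g = "\<lambda>_. 0" and h = "\<lambda>ys. ys ! 0"]
    by (simp add: computable_zero computable_nth)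
  have "computable (Suc 1) (\<lambda>xs. xs ! 1 - xs ! 0)"
    using computable_primrec[where n = 1 and g = "\<lambda>ys. ys ! 0" and h = "\<lambda>ys. ys ! 1 - 1"]
      computable_comp1[OF pred computable_nth[of 1 "Suc (Suc 1)"]]
    by (simp add: computable_nth)
  from computable_comp2[OF this[unfolded Suc_1] assms(2,1)] show ?thesis by simp
qed

lemma computable_mult:
  assumes "computable n f" and "computable n g"
  shows "computable n (\<lambda>xs. f xs * g xs)"
proof -
  have "computable (Suc 1) (\<lambda>xs. xs ! 0 * xs ! 1)"
    using computable_primrec[where n = 1 and g = "\<lambda>_. 0" and h = "\<lambda>ys. ys ! 1 + ys ! 2"]
      computable_add[OF computable_nth[of 1 "Suc (Suc 1)"] computable_nth[of 2 "Suc (Suc 1)"]]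
    by (simp add: computable_zero)
  from computable_comp2[OF this[unfolded Suc_1] assms] show ?thesis by simp
qed

lemma computable_funpow:
  assumes "computable 1 (\<lambda>xs. t (xs ! 0))" and "computable n f" and "computable n g"
  shows "computable n (\<lambda>xs. (t ^^ f xs) (g xs))"
proof -
  have "computable (Suc 1) (\<lambda>xs. (t ^^ (xs ! 0)) (xs ! 1))"
    using computable_primrec[where n = 1 and g = "\<lambda>ys. ys ! 0" and h = "\<lambda>ys. t (ys ! 1)"]
      computable_comp1[OF assms(1) computable_nth[of 1 "Suc (Suc 1)"]]
    by (simp add: computable_nth)
  from computable_comp2[OF this[unfolded Suc_1] assms(2,3)] show ?thesis by simp
qed

lemma computable_tl:
  assumes "computable n f"
  shows "computable (Suc n) (\<lambda>xs. f (tl xs))"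
proof -
  have "computable (Suc n) (\<lambda>xs. f (map (\<lambda>h. h xs) (map (\<lambda>i xs. xs ! Suc i) [0..<n])))"
    by (rule computable_comp) (auto simp: assms intro: computable_nth)
  moreover have "map (\<lambda>i. xs ! Suc i) [0..<n] = tl xs" if "length xs = Suc n" for xs :: "nat list"
    using that by (simp add: list_eq_iff_nth_eq nth_tl)
  ultimately show ?thesis by (auto elim!: computable_cong simp: comp_def)
qed

definition decidable :: "nat \<Rightarrow> (nat list \<Rightarrow> bool) \<Rightarrow> bool" where
  "decidable n P \<longleftrightarrow> computable n (\<lambda>xs. of_bool (P xs))"

lemma decidable_comp:
  assumes "decidable (length hs) P" and "\<And>h. h \<in> set hs \<Longrightarrow> computable n h"
  shows "decidable n (\<lambda>xs. P (map (\<lambda>h. h xs) hs))"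
  using computable_comp[OF assms[unfolded decidable_def]] unfolding decidable_def .

lemma decidable_cong:
  "decidable n P \<Longrightarrow> (\<And>xs. length xs = n \<Longrightarrow> P xs = Q xs) \<Longrightarrow> decidable n Q"
  unfolding decidable_def by (erule computable_cong) simp

lemma decidable_less:
  assumes "computable n f" and "computable n g"
  shows "decidable n (\<lambda>xs. f xs < g xs)"
proof -
  have "computable n (\<lambda>xs. 1 - (1 - (g xs - f xs)))"
    by (intro computable_diff computable_const assms)
  then show ?thesis unfolding decidable_def by (rule computable_cong) auto
qed

lemma decidable_eq:
  assumes "computable n f" and "computable n g"
  shows "decidable n (\<lambda>xs. f xs = g xs)"
proof -
  have "computable n (\<lambda>xs. 1 - ((f xs - g xs) + (g xs - f xs)))"
    by (intro computable_diff computable_add computable_const assms)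
  then show ?thesis unfolding decidable_def by (rule computable_cong) auto
qed

lemma decidable_not:
  assumes "decidable n P"
  shows "decidable n (\<lambda>xs. \<not> P xs)"
proof -
  have "computable n (\<lambda>xs. 1 - of_bool (P xs))"
    using assms unfolding decidable_def by (intro computable_diff computable_const)
  then show ?thesis unfolding decidable_def by (rule computable_cong) simp
qed

lemma decidable_conj:
  assumes "decidable n P" and "decidable n Q"
  shows "decidable n (\<lambda>xs. P xs \<and> Q xs)"
proof -
  have "computable n (\<lambda>xs. of_bool (P xs) * of_bool (Q xs))"
    using assms unfolding decidable_def by (intro computable_mult)
  then show ?thesis unfolding decidable_def by (rule computable_cong) simp
qed

lemma decidable_disj:
  assumes "decidable n P" and "decidable n Q"
  shows "decidable n (\<lambda>xs. P xs \<or> Q xs)"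
proof -
  have "decidable n (\<lambda>xs. \<not> (\<not> P xs \<and> \<not> Q xs))"
    using assms by (intro decidable_not decidable_conj)
  then show ?thesis by (rule decidable_cong) simp
qed

lemma decidable_iff:
  assumes "decidable n P" and "decidable n Q"
  shows "decidable n (\<lambda>xs. P xs \<longleftrightarrow> Q xs)"
proof -
  have "decidable n (\<lambda>xs. of_bool (P xs) = (of_bool (Q xs) :: nat))"
    by (intro decidable_eq assms[unfolded decidable_def])
  then show ?thesis by (rule decidable_cong) simp
qed

lemma computable_Least:
  assumes "decidable (Suc n) P" and "\<And>xs. length xs = n \<Longrightarrow> \<exists>y. P (y # xs)"
  shows "computable n (\<lambda>xs. LEAST y. P (y # xs))"
proof -
  have "computable n (\<lambda>xs. LEAST y. 1 - of_bool (P (y # xs)) = (0::nat))"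
  proof (rule computable_Least_zero[where f = "\<lambda>ys. 1 - of_bool (P ys) :: nat"])
    show "computable (Suc n) (\<lambda>ys. 1 - of_bool (P ys))"
      by (intro computable_diff computable_const assms(1)[unfolded decidable_def])
    fix xs :: "nat list"
    assume "length xs = n"
    then obtain y where "P (y # xs)" using assms(2) by blast
    then show "\<exists>y. 1 - of_bool (P (y # xs)) = (0::nat)" by auto
  qed
  then show ?thesis by (rule computable_cong) simp
qed

lemma Least_less_iff_bex: "(LEAST i. i = (m::nat) \<or> P i) < m \<longleftrightarrow> (\<exists>i<m. P i)"
proof
  assume "(LEAST i. i = m \<or> P i) < m"
  moreover have "(LEAST i. i = m \<or> P i) = m \<or> P (LEAST i. i = m \<or> P i)"
    by (rule LeastI[of _ m]) simp
  ultimately show "\<exists>i<m. P i" by auto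
next
  assume "\<exists>i<m. P i"
  then obtain i where "i < m" and "P i" by blast
  then have "(LEAST i. i = m \<or> P i) \<le> i" by (intro Least_le) simp
  with \<open>i < m\<close> show "(LEAST i. i = m \<or> P i) < m" by simp
qed

lemma decidable_bex:
  assumes "decidable (Suc n) P" and "computable n k"
  shows "decidable n (\<lambda>xs. \<exists>i < k xs. P (i # xs))"
proof -
  have "decidable (Suc n) (\<lambda>ys. ys ! 0 = k (tl ys) \<or> P ys)"
    by (intro decidable_disj decidable_eq computable_nth computable_tl assms) simp
  then have "computable n (\<lambda>xs. LEAST i. (i # xs) ! 0 = k (tl (i # xs)) \<or> P (i # xs))"
    by (rule computable_Least) auto
  then have "decidable n (\<lambda>xs. (LEAST i. i = k xs \<or> P (i # xs)) < k xs)"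
    using assms(2) by (intro decidable_less) simp_all
  then show ?thesis by (simp only: Least_less_iff_bex)
qed

lemma computable_div:
  assumes "computable n f" and "0 < k"
  shows "computable n (\<lambda>xs. f xs div k)"
proof -
  have "decidable (Suc n) (\<lambda>ys. f (tl ys) < k * ys ! 0 + k)"
    by (intro decidable_less computable_tl computable_mult computable_const
        computable_add computable_nth assms) simp
  then have "computable n (\<lambda>xs. LEAST y. f (tl (y # xs)) < k * (y # xs) ! 0 + k)"
  proof (rule computable_Least)
    show "\<exists>y. f (tl (y # xs)) < k * (y # xs) ! 0 + k" for xs
      using assms(2) gr0_conv_Suc by (intro exI[of _ "f xs"]) auto
  qed
  moreover have "(LEAST y. m < k * y + k) = m div k" for m
  proof (rule Least_equality)
    show "m < k * (m div k) + k"
      using assms(2) by (simp add: add.commute dividend_less_times_div)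
    show "m div k \<le> y" if "m < k * y + k" for y
      using that less_mult_imp_div_less[of m "Suc y" k] by (simp add: algebra_simps)
  qed
  ultimately show ?thesis by simp
qed

lemma computable_seq_iff_decidable: "computable_seq X \<longleftrightarrow> decidable 1 (\<lambda>xs. X (xs ! 0))"
  unfolding computable_seq_def computable1_def decidable_def computable_def
proof
  assume "\<exists>f. \<forall>n. eval f [n] (if X n then 1 else 0)"
  then obtain f where "\<forall>n. eval f [n] (if X n then 1 else 0)" ..
  then show "\<exists>f. \<forall>xs. length xs = 1 \<longrightarrow> eval f xs (of_bool (X (xs ! 0)))"
    by (intro exI[of _ f]) (auto simp: length_Suc_conv of_bool_def split del: if_split)
next
  assume "\<exists>f. \<forall>xs. length xs = 1 \<longrightarrow> eval f xs (of_bool (X (xs ! 0)))"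
  then obtain f where f: "\<forall>xs. length xs = 1 \<longrightarrow> eval f xs (of_bool (X (xs ! 0)))" ..
  show "\<exists>f. \<forall>n. eval f [n] (if X n then 1 else 0)"
    by (intro exI[of _ f] allI)
      (use f[rule_format, of "[_]"] in \<open>simp add: of_bool_def split del: if_split\<close>)
qed

lemma computable2_iff: "computable2 h \<longleftrightarrow> computable 2 (\<lambda>xs. h (xs ! 0) (xs ! 1))"
  unfolding computable2_def computable_def
proof
  assume "\<exists>f. \<forall>m n. eval f [m, n] (h m n)"
  then obtain f where "\<forall>m n. eval f [m, n] (h m n)" ..
  then show "\<exists>f. \<forall>xs. length xs = 2 \<longrightarrow> eval f xs (h (xs ! 0) (xs ! 1))"
    by (intro exI[of _ f]) (auto simp: length_Suc_conv numeral_2_eq_2)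
next
  assume "\<exists>f. \<forall>xs. length xs = 2 \<longrightarrow> eval f xs (h (xs ! 0) (xs ! 1))"
  then obtain f where f: "\<forall>xs. length xs = 2 \<longrightarrow> eval f xs (h (xs ! 0) (xs ! 1))" ..
  show "\<exists>f. \<forall>m n. eval f [m, n] (h m n)"
    by (intro exI[of _ f] allI) (use f[rule_format, of "[_, _]"] in simp)
qed

section \<open>Computing with codes of binary strings\<close>

lemma code_str_append: "code_str (s @ t) = code_str s + 2 ^ length s * code_str t"
  by (induction s) auto

lemma length_le_code_str: "length s \<le> code_str s"
  by (induction s) auto

lemma inj_code_str: "inj code_str"
proof (rule injI)
  show "code_str s = code_str t \<Longrightarrow> s = t" for s t
  proof (induction s arbitrary: t)
    case Nil
    then show ?case by (cases t) (auto split: if_splits)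
  next
    case (Cons b s)
    then obtain c t' where "t = c # t'" by (cases t) (auto split: if_splits)
    with Cons show ?case by (auto split: if_splits) presburger+
  qed
qed

lemma surj_code_str: "surj code_str"
proof -
  have "n \<in> range code_str" for n
  proof (induction n rule: less_induct)
    case (less n)
    show ?case
    proof (cases n)
      case 0
      then show ?thesis by (metis code_str.simps(1) rangeI)
    next
      case (Suc m)
      then have "m div 2 < n" by simp
      then obtain s where s: "code_str s = m div 2" using less by (metis rangeE)
      have "n = code_str ((if even m then False else True) # s)"
        using Suc s by auto
      then show ?thesis by blast
    qed
  qed
  then show ?thesis by blast
qed

definition decode_str :: "nat \<Rightarrow> bool list" where
  "decode_str = inv code_str"

lemma decode_code_str [simp]: "decode_str (code_str s) = s"
  unfolding decode_str_def by (simp add: inj_code_str)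

lemma code_decode_str [simp]: "code_str (decode_str c) = c"
  unfolding decode_str_def by (simp add: surj_code_str surj_f_inv_f)

definition code_tl :: "nat \<Rightarrow> nat" where
  "code_tl c = (c - 1) div 2"

lemma code_tl_code_str: "code_tl (code_str s) = code_str (tl s)"
  by (cases s) (auto simp: code_tl_def)

lemma funpow_code_tl: "(code_tl ^^ i) (code_str s) = code_str (drop i s)"
  by (induction i arbitrary: s) (simp_all add: code_tl_code_str tl_drop drop_Suc)

lemma computable_code_drop:
  assumes "computable n f" and "computable n g"
  shows "computable n (\<lambda>xs. code_str (drop (g xs) (decode_str (f xs))))"
proof -
  have "computable 1 (\<lambda>xs. code_tl (xs ! 0))"
    unfolding code_tl_def
    by (intro computable_div computable_diff computable_nth computable_const) simp_all
  from computable_funpow[OF this assms(2,1)] show ?thesis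
    by (simp flip: funpow_code_tl)
qed

lemma decidable_length_le:
  assumes "computable n f" and "computable n g"
  shows "decidable n (\<lambda>xs. length (decode_str (f xs)) \<le> g xs)"
proof -
  have "decidable n (\<lambda>xs. code_str (drop (g xs) (decode_str (f xs))) = 0)"
    by (intro decidable_eq computable_code_drop computable_const assms)
  moreover have "code_str t = 0 \<longleftrightarrow> t = []" for t
    by (cases t) auto
  ultimately show ?thesis by simp
qed

lemma decidable_length_eq:
  assumes "computable n f" and "computable n g"
  shows "decidable n (\<lambda>xs. length (decode_str (f xs)) = g xs)"
proof -
  have "decidable n (\<lambda>xs. length (decode_str (f xs)) \<le> g xs \<and>
      (g xs = 0 \<or> \<not> length (decode_str (f xs)) \<le> g xs - 1))"
    by (intro decidable_conj decidable_disj decidable_not decidable_eq decidable_length_le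
        computable_diff computable_const assms)
  then show ?thesis by (rule decidable_cong) auto
qed

lemma decidable_nth_decode_str:
  assumes "computable n f" and "computable n g"
  shows "decidable n (\<lambda>xs. g xs < length (decode_str (f xs)) \<and> decode_str (f xs) ! g xs)"
proof -
  let ?d = "\<lambda>xs. code_str (drop (g xs) (decode_str (f xs)))"
  have "decidable n (\<lambda>xs. ?d xs \<noteq> 0 \<and> ?d xs = 2 * (?d xs div 2))"
    by (intro decidable_conj decidable_not decidable_eq computable_mult computable_div
        computable_code_drop computable_const assms) simp
  moreover have "code_str t \<noteq> 0 \<and> code_str t = 2 * (code_str t div 2) \<longleftrightarrow> t \<noteq> [] \<and> hd t" for t
    by (cases t) auto
  ultimately have "decidable n (\<lambda>xs. drop (g xs) (decode_str (f xs)) \<noteq> [] \<and>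
      hd (drop (g xs) (decode_str (f xs))))"
    by (simp only:)
  then show ?thesis by (rule decidable_cong) (auto simp: hd_drop_conv_nth)
qed

lemma take_decode_str_eq_iff:
  "take (length s) (decode_str c) = s \<longleftrightarrow> (\<exists>d < Suc c. c = code_str s + 2 ^ length s * d)"
proof
  assume "take (length s) (decode_str c) = s"
  then have "decode_str c = s @ drop (length s) (decode_str c)"
    by (metis append_take_drop_id)
  moreover define d where "d = code_str (drop (length s) (decode_str c))"
  ultimately have c: "c = code_str s + 2 ^ length s * d"
    by (metis code_decode_str code_str_append)
  have "1 * d \<le> 2 ^ length s * d"
    by (rule mult_le_mono1) simp
  with c have "d < Suc c" by linarith
  with c show "\<exists>d < Suc c. c = code_str s + 2 ^ length s * d" by blast
next
  assume "\<exists>d < Suc c. c = code_str s + 2 ^ length s * d"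
  then obtain d where "c = code_str (s @ decode_str d)"
    by (auto simp: code_str_append)
  then show "take (length s) (decode_str c) = s" by simp
qed

lemma decidable_take_decode_str:
  assumes "computable n f"
  shows "decidable n (\<lambda>xs. take (length s) (decode_str (f xs)) = s)"
proof -
  have "computable n (\<lambda>xs. Suc (f xs))"
    using computable_add[OF assms computable_const[of n 1]] by simp
  then have "decidable n (\<lambda>xs. \<exists>d < Suc (f xs).
      (\<lambda>ys. f (tl ys) = code_str s + 2 ^ length s * ys ! 0) (d # xs))"
    by (intro decidable_bex decidable_eq computable_tl computable_add computable_mult
        computable_const computable_nth assms) simp_all
  then show ?thesis by (simp add: take_decode_str_eq_iff)
qed

lemma computable_search_bound:
  assumes R: "decidable 3 (\<lambda>ys. R (ys ! 0) (ys ! 1) (decode_str (ys ! 2)))"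
    and ex: "\<And>j. \<exists>p t. R j p (decode_str t)"
  shows "computable 1 (\<lambda>xs. LEAST b. \<exists>p < Suc b. \<exists>t < Suc b. R (xs ! 0) p (decode_str t))"
proof -
  have "decidable 4 (\<lambda>xs. (\<lambda>ys. R (ys ! 0) (ys ! 1) (decode_str (ys ! 2)))
      (map (\<lambda>h. h xs) [\<lambda>ys. ys ! 3, \<lambda>ys. ys ! 1, \<lambda>ys. ys ! 0]))"
    by (rule decidable_comp) (use R in \<open>auto simp: numeral_3_eq_3 intro: computable_nth\<close>)
  then have "decidable 3 (\<lambda>xs. \<exists>t < Suc (xs ! 1).
      (\<lambda>ys. R (ys ! 3) (ys ! 1) (decode_str (ys ! 0))) (t # xs))"
    by (intro decidable_bex computable_Suc computable_nth) simp_all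
  then have "decidable 2 (\<lambda>xs. \<exists>p < Suc (xs ! 0).
      (\<lambda>ys. \<exists>t < Suc (ys ! 1). R (ys ! 2) (ys ! 0) (decode_str t)) (p # xs))"
    by (intro decidable_bex computable_Suc computable_nth) simp_all
  then have "computable 1 (\<lambda>xs. LEAST b. (\<lambda>ys. \<exists>p < Suc (ys ! 0). \<exists>t < Suc (ys ! 0).
      R (ys ! 1) p (decode_str t)) (b # xs))"
  proof (intro computable_Least)
    show "\<exists>b p. p < Suc ((b # xs) ! 0) \<and> (\<exists>t < Suc ((b # xs) ! 0). R ((b # xs) ! 1) p (decode_str t))"
      for xs :: "nat list"
    proof -
      obtain p t where "R (xs ! 0) p (decode_str t)" using ex by blast
      then show ?thesis
        unfolding One_nat_def nth_Cons_0 nth_Cons_Suc by (meson le_imp_less_Suc max.cobounded1 max.cobounded2)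
    qed
  qed (simp add: numeral_2_eq_2)
  then show ?thesis by simp
qed

lemma computable_search_witness:
  assumes R: "decidable 3 (\<lambda>ys. R (ys ! 0) (ys ! 1) (decode_str (ys ! 2)))"
    and B: "computable 1 (\<lambda>xs. B (xs ! 0))"
    and ex: "\<And>j. \<exists>p < Suc (B j). \<exists>t. R j p (decode_str t)"
  shows "computable 1 (\<lambda>xs. LEAST t. \<exists>p < Suc (B (xs ! 0)). R (xs ! 0) p (decode_str t))"
proof -
  have "decidable 3 (\<lambda>xs. (\<lambda>ys. R (ys ! 0) (ys ! 1) (decode_str (ys ! 2)))
      (map (\<lambda>h. h xs) [\<lambda>ys. ys ! 2, \<lambda>ys. ys ! 0, \<lambda>ys. ys ! 1]))"
    by (rule decidable_comp) (use R in \<open>auto simp: numeral_3_eq_3 intro: computable_nth\<close>)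
  then have "decidable 2 (\<lambda>xs. \<exists>p < Suc (B (xs ! 1)).
      (\<lambda>ys. R (ys ! 2) (ys ! 0) (decode_str (ys ! 1))) (p # xs))"
    using computable_comp1[OF B computable_nth[of 1 2]]
    by (intro decidable_bex computable_Suc) simp_all
  then have "computable 1 (\<lambda>xs. LEAST t.
      \<exists>p < Suc (B ((t # xs) ! 1)). R ((t # xs) ! 1) p (decode_str ((t # xs) ! 0)))"
  proof (intro computable_Least)
    show "\<exists>t p. p < Suc (B ((t # xs) ! 1)) \<and> R ((t # xs) ! 1) p (decode_str ((t # xs) ! 0))"
      for xs :: "nat list"
      using ex[of "xs ! 0"] by auto
  qed (simp add: numeral_2_eq_2)
  then show ?thesis by simp
qed

lemma computable_seq_by_search:
  assumes R: "decidable 3 (\<lambda>ys. R (ys ! 0) (ys ! 1) (decode_str (ys ! 2)))"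
    and ex: "\<And>j. \<exists>p \<tau>. R j p \<tau>"
    and sound: "\<And>j p \<tau>. R j p \<tau> \<Longrightarrow> j < length \<tau> \<and> \<tau> ! j = X j"
  shows "computable_seq X"
proof -
  \<comment> \<open>Dovetailing: \<open>B j\<close> bounds both a stage and a code at which a witness appears.\<close>
  define B where "B j = (LEAST b. \<exists>p < Suc b. \<exists>t < Suc b. R j p (decode_str t))" for j
  define W where "W j = (LEAST t. \<exists>p < Suc (B j). R j p (decode_str t))" for j
  have ex_code: "\<exists>p t. R j p (decode_str t)" for j
    using ex by (metis decode_code_str)
  have B_bound: "\<exists>p < Suc (B j). \<exists>t < Suc (B j). R j p (decode_str t)" for j
  proof -
    obtain p t where "R j p (decode_str t)" using ex_code by blast
    then have "\<exists>p' < Suc (max p t). \<exists>t' < Suc (max p t). R j p' (decode_str t')"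
      by (meson le_imp_less_Suc max.cobounded1 max.cobounded2)
    then show ?thesis unfolding B_def by (rule LeastI)
  qed
  have W: "\<exists>p < Suc (B j). R j p (decode_str (W j))" for j
    unfolding W_def by (rule LeastI_ex) (use B_bound in blast)
  have "computable 1 (\<lambda>xs. B (xs ! 0))"
    unfolding B_def by (rule computable_search_bound[OF R ex_code])
  then have "computable 1 (\<lambda>xs. W (xs ! 0))"
    unfolding W_def by (rule computable_search_witness[OF R]) (use B_bound in blast)
  then have "decidable 1 (\<lambda>xs. xs ! 0 < length (decode_str (W (xs ! 0))) \<and> decode_str (W (xs ! 0)) ! (xs ! 0))"
    by (intro decidable_nth_decode_str computable_nth) simp_all
  moreover have "j < length (decode_str (W j)) \<and> decode_str (W j) ! j \<longleftrightarrow> X j" for j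
    using W[of j] sound by blast
  ultimately show ?thesis
    unfolding computable_seq_iff_decidable by simp
qed

section \<open>Extensions and the measure of a cylinder\<close>

lemma length_restr [simp]: "length (restr X n) = n"
  by (simp add: restr_def)

lemma take_restr: "m \<le> n \<Longrightarrow> take m (restr X n) = restr X m"
  by (simp add: restr_def take_map)

lemma nth_restr: "i < n \<Longrightarrow> restr X n ! i = X i"
  by (simp add: restr_def)

lemma restr_Suc: "restr X (Suc n) = restr X n @ [X n]"
  by (simp add: restr_def)

lemma restr_iff_nth: "\<sigma> = restr X (length \<sigma>) \<longleftrightarrow> (\<forall>i < length \<sigma>. \<sigma> ! i = X i)"
  by (auto simp: list_eq_iff_nth_eq nth_restr)

definition extensions :: "bool list \<Rightarrow> nat \<Rightarrow> bool list set" where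
  "extensions \<sigma> n = {\<tau>. length \<tau> = n \<and> take (length \<sigma>) \<tau> = \<sigma>}"

lemma rho_bar_extensions: "rho_bar \<rho> \<sigma> = (INF n\<in>{length \<sigma>..}. \<Sum>\<tau>\<in>extensions \<sigma> n. \<rho> \<tau>)"
  by (simp add: rho_bar_def extensions_def)

lemma finite_extensions: "finite (extensions \<sigma> n)"
  unfolding extensions_def
  by (rule finite_subset[OF _ finite_lists_length_eq[of "UNIV :: bool set" n]]) auto

lemma extensions_length: "extensions \<sigma> (length \<sigma>) = {\<sigma>}"
  by (auto simp: extensions_def)

lemma restr_in_extensions: "N \<le> k \<Longrightarrow> restr X k \<in> extensions (restr X N) k"
  by (simp add: extensions_def take_restr)

lemma extensions_Suc:
  assumes "length \<sigma> \<le> n"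
  shows "extensions \<sigma> (Suc n) =
    (\<lambda>\<tau>. \<tau> @ [False]) ` extensions \<sigma> n \<union> (\<lambda>\<tau>. \<tau> @ [True]) ` extensions \<sigma> n"
proof (intro equalityI subsetI)
  fix \<tau> assume "\<tau> \<in> extensions \<sigma> (Suc n)"
  then have \<tau>: "length \<tau> = Suc n" "take (length \<sigma>) \<tau> = \<sigma>" by (auto simp: extensions_def)
  then have "\<tau> = butlast \<tau> @ [last \<tau>]"
    by (metis append_butlast_last_id list.size(3) nat.distinct(1))
  moreover have "butlast \<tau> \<in> extensions \<sigma> n"
    using \<tau> assms by (auto simp: extensions_def take_butlast)
  ultimately show "\<tau> \<in> (\<lambda>\<tau>. \<tau> @ [False]) ` extensions \<sigma> n \<union> (\<lambda>\<tau>. \<tau> @ [True]) ` extensions \<sigma> n"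
    by (cases "last \<tau>") (auto intro!: image_eqI[where x = "butlast \<tau>"])
qed (use assms in \<open>auto simp: extensions_def\<close>)

lemma sum_extensions_Suc_le:
  assumes "semimeasure \<rho>" and "length \<sigma> \<le> n"
  shows "(\<Sum>\<tau>\<in>extensions \<sigma> (Suc n). \<rho> \<tau>) \<le> (\<Sum>\<tau>\<in>extensions \<sigma> n. \<rho> \<tau>)"
proof -
  let ?E = "extensions \<sigma> n"
  have inj: "inj_on (\<lambda>\<tau>. \<tau> @ [b]) A" for b and A :: "bool list set"
    by (auto intro: inj_onI)
  have "(\<Sum>\<tau>\<in>extensions \<sigma> (Suc n). \<rho> \<tau>) =
      (\<Sum>\<tau>\<in>(\<lambda>\<tau>. \<tau> @ [False]) ` ?E. \<rho> \<tau>) + (\<Sum>\<tau>\<in>(\<lambda>\<tau>. \<tau> @ [True]) ` ?E. \<rho> \<tau>)"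
    unfolding extensions_Suc[OF assms(2)]
    by (intro sum.union_disjoint) (auto simp: finite_extensions)
  also have "\<dots> = (\<Sum>\<tau>\<in>?E. \<rho> (\<tau> @ [False]) + \<rho> (\<tau> @ [True]))"
    by (simp add: sum.reindex[OF inj] sum.distrib)
  also have "\<dots> \<le> (\<Sum>\<tau>\<in>?E. \<rho> \<tau>)"
    using assms(1) unfolding semimeasure_def by (intro sum_mono) auto
  finally show ?thesis .
qed

lemma sum_extensions_antimono:
  assumes "semimeasure \<rho>" and "length \<sigma> \<le> m" and "m \<le> n"
  shows "(\<Sum>\<tau>\<in>extensions \<sigma> n. \<rho> \<tau>) \<le> (\<Sum>\<tau>\<in>extensions \<sigma> m. \<rho> \<tau>)"
  using assms(3)
proof (induction n rule: dec_induct)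
  case (step n)
  then show ?case
    using sum_extensions_Suc_le[OF assms(1), of \<sigma> n] assms(2) by linarith
qed simp

lemma rho_bar_le:
  assumes "semimeasure \<rho>"
  shows "rho_bar \<rho> \<sigma> \<le> \<rho> \<sigma>"
proof -
  have "bdd_below ((\<lambda>n. \<Sum>\<tau>\<in>extensions \<sigma> n. \<rho> \<tau>) ` {length \<sigma>..})"
    using assms unfolding semimeasure_def by (intro bdd_belowI[of _ 0]) (auto intro: sum_nonneg)
  from cINF_lower[OF this, of "length \<sigma>"] show ?thesis
    by (simp add: rho_bar_extensions extensions_length)
qed

lemma heavy_extension_unique:
  assumes "semimeasure \<rho>" and "length \<sigma> \<le> m" and "m \<le> n"
    and "(\<Sum>\<tau>\<in>extensions \<sigma> m. \<rho> \<tau>) < 2 * q"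
    and "\<tau>\<^sub>1 \<in> extensions \<sigma> n" "\<tau>\<^sub>2 \<in> extensions \<sigma> n" and "q < \<rho> \<tau>\<^sub>1" "q < \<rho> \<tau>\<^sub>2"
  shows "\<tau>\<^sub>1 = \<tau>\<^sub>2"
proof (rule ccontr)
  assume "\<tau>\<^sub>1 \<noteq> \<tau>\<^sub>2"
  then have "\<rho> \<tau>\<^sub>1 + \<rho> \<tau>\<^sub>2 = (\<Sum>\<tau>\<in>{\<tau>\<^sub>1, \<tau>\<^sub>2}. \<rho> \<tau>)" by simp
  also have "\<dots> \<le> (\<Sum>\<tau>\<in>extensions \<sigma> n. \<rho> \<tau>)"
    using assms(1,5,6) unfolding semimeasure_def
    by (intro sum_mono2 finite_extensions) auto
  also have "\<dots> \<le> (\<Sum>\<tau>\<in>extensions \<sigma> m. \<rho> \<tau>)"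
    by (rule sum_extensions_antimono[OF assms(1-3)])
  finally show False using assms(4,7,8) by linarith
qed

lemma atom_isolates_branch:
  assumes "semimeasure \<rho>" and lim: "(\<lambda>n. rho_bar \<rho> (restr X n)) \<longlonglongrightarrow> c"
    and "c / 2 < q" and "q < c"
  obtains N m where "N \<le> m" and "\<And>k. N \<le> k \<Longrightarrow> q < \<rho> (restr X k)"
    and "\<And>k \<tau>. m \<le> k \<Longrightarrow> \<tau> \<in> extensions (restr X N) k \<Longrightarrow> q < \<rho> \<tau> \<Longrightarrow> \<tau> = restr X k"
proof -
  have "eventually (\<lambda>n. q < rho_bar \<rho> (restr X n) \<and> rho_bar \<rho> (restr X n) < 2 * q) sequentially"
    using order_tendstoD[OF lim] assms(3,4) by (auto intro: eventually_conj)
  then obtain N where N: "\<And>n. N \<le> n \<Longrightarrow> q < rho_bar \<rho> (restr X n) \<and> rho_bar \<rho> (restr X n) < 2 * q"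
    unfolding eventually_sequentially by blast
  have heavy: "q < \<rho> (restr X k)" if "N \<le> k" for k
    using N[OF that] rho_bar_le[OF assms(1)] by (meson less_le_trans)
  have "bdd_below ((\<lambda>n. \<Sum>\<tau>\<in>extensions (restr X N) n. \<rho> \<tau>) ` {N..})"
    using assms(1) unfolding semimeasure_def by (intro bdd_belowI[of _ 0]) (auto intro: sum_nonneg)
  moreover have "(INF n\<in>{N..}. \<Sum>\<tau>\<in>extensions (restr X N) n. \<rho> \<tau>) < 2 * q"
    using N[of N] by (simp add: rho_bar_extensions)
  ultimately obtain m where m: "N \<le> m" "(\<Sum>\<tau>\<in>extensions (restr X N) m. \<rho> \<tau>) < 2 * q"
    by (auto simp: cINF_less_iff)
  show ?thesis
  proof (rule that[OF m(1) heavy])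
    show "\<tau> = restr X k" if "m \<le> k" "\<tau> \<in> extensions (restr X N) k" "q < \<rho> \<tau>" for k \<tau>
      by (rule heavy_extension_unique[OF assms(1), of "restr X N" m])
        (use that m heavy[of k] restr_in_extensions[of N k X] in auto)
  qed
qed

section \<open>Computable sequences are atoms\<close>

definition point_mass :: "(nat \<Rightarrow> bool) \<Rightarrow> bool list \<Rightarrow> real" where
  "point_mass X \<sigma> = of_bool (\<sigma> = restr X (length \<sigma>))"

lemma semimeasure_point_mass: "semimeasure (point_mass X)"
  unfolding semimeasure_def point_mass_def
proof (intro conjI allI)
  fix \<sigma>
  have "\<sigma> @ [b] = restr X (length (\<sigma> @ [b])) \<longleftrightarrow> \<sigma> = restr X (length \<sigma>) \<and> b = X (length \<sigma>)" for b
    by (auto simp: restr_Suc)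
  then show "of_bool (\<sigma> @ [False] = restr X (length (\<sigma> @ [False]))) +
      of_bool (\<sigma> @ [True] = restr X (length (\<sigma> @ [True]))) \<le> (of_bool (\<sigma> = restr X (length \<sigma>)) :: real)"
    by (cases "X (length \<sigma>)") auto
qed (auto simp: restr_def)

lemma rho_bar_point_mass: "rho_bar (point_mass X) (restr X n) = 1"
proof -
  have "(\<Sum>\<tau>\<in>extensions (restr X n) k. point_mass X \<tau>) = 1" if "n \<le> k" for k
  proof -
    have "(\<Sum>\<tau>\<in>extensions (restr X n) k. point_mass X \<tau>) =
        (\<Sum>\<tau>\<in>extensions (restr X n) k. of_bool (\<tau> = restr X k))"
      by (rule sum.cong) (auto simp: point_mass_def extensions_def)
    also have "\<dots> = 1"
      using restr_in_extensions[OF that] by (simp add: finite_extensions)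
    finally show ?thesis .
  qed
  then show ?thesis
    by (simp add: rho_bar_extensions cINF_const)
qed

lemma decidable_restr:
  assumes X: "computable_seq X" and f: "computable n f"
  shows "decidable n (\<lambda>xs. decode_str (f xs) = restr X (length (decode_str (f xs))))"
proof -
  have "decidable (Suc n) (\<lambda>ys. (\<lambda>zs. X (zs ! 0)) (map (\<lambda>h. h ys) [\<lambda>ys. ys ! 0]))"
    by (rule decidable_comp) (use X in \<open>auto simp: computable_seq_iff_decidable intro: computable_nth\<close>)
  then have "decidable n (\<lambda>xs. \<exists>i < f xs. (\<lambda>ys.
      (ys ! 0 < length (decode_str (f (tl ys))) \<and> decode_str (f (tl ys)) ! (ys ! 0)) \<noteq>
      (\<not> length (decode_str (f (tl ys))) \<le> ys ! 0 \<and> X (ys ! 0))) (i # xs))"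
    by (intro decidable_bex decidable_not decidable_iff decidable_conj decidable_nth_decode_str
        decidable_length_le computable_tl computable_nth f) simp_all
  then have "decidable n (\<lambda>xs. \<not> (\<exists>i < code_str (decode_str (f xs)).
      (i < length (decode_str (f xs)) \<and> decode_str (f xs) ! i) \<noteq> (i < length (decode_str (f xs)) \<and> X i)))"
    by (auto dest: decidable_not simp: not_le)
  moreover have "\<sigma> = restr X (length \<sigma>) \<longleftrightarrow>
      \<not> (\<exists>i < code_str \<sigma>. (i < length \<sigma> \<and> \<sigma> ! i) \<noteq> (i < length \<sigma> \<and> X i))" for \<sigma>
    unfolding restr_iff_nth using length_le_code_str[of \<sigma>] by (meson less_le_trans)
  ultimately show ?thesis by simp
qed

lemma left_ce_point_mass:
  assumes "computable_seq X"
  shows "left_ce (point_mass X)"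
  unfolding left_ce_def
proof (intro exI conjI allI)
  show "computable2 (\<lambda>c s. of_bool (decode_str c = restr X (length (decode_str c))))"
    using decidable_restr[OF assms computable_nth[of 0 2]]
    unfolding computable2_iff decidable_def by simp
  show "computable2 (\<lambda>c s. 0)"
    unfolding computable2_iff by (rule computable_const)
  show "let q = \<lambda>s. real (of_bool (decode_str (code_str \<sigma>) = restr X (length (decode_str (code_str \<sigma>))))) /
      real (0 + 1) in mono q \<and> q \<longlonglongrightarrow> point_mass X \<sigma>" for \<sigma>
    by (simp add: point_mass_def mono_def)
qed

section \<open>Atoms are computable\<close>

lemma less_frac_iff_nat:
  assumes "0 < b"
  shows "real a / real b < real k / real (d + 1) \<longleftrightarrow> a * (d + 1) < b * k"
proof -
  have "real a / real b < real k / real (d + 1) \<longleftrightarrow> real a * real (d + 1) < real k * real b"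
    using assms by (simp add: frac_less_eq field_simps)
  also have "\<dots> \<longleftrightarrow> a * (d + 1) < b * k"
    by (metis of_nat_less_iff of_nat_mult mult.commute)
  finally show ?thesis .
qed

lemma rational_between:
  fixes x y :: real
  assumes "0 \<le> x" and "x < y"
  obtains a b :: nat where "0 < b" and "x < real a / real b" and "real a / real b < y"
proof -
  obtain r where r: "r \<in> \<rat>" "x < r" "r < y"
    using Rats_dense_in_real[OF assms(2)] by blast
  then obtain a b :: nat where "b \<noteq> 0" and "\<bar>r\<bar> = real a / real b"
    by (metis Rats_abs_nat_div_natE)
  with r assms(1) show ?thesis
    using that by auto
qed

lemma decidable_heavy_extension:
  assumes "computable2 num" and "computable2 den"
  shows "decidable 3 (\<lambda>ys. length (decode_str (ys ! 2)) = Suc (ys ! 0 + m) \<and>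
    take (length \<sigma>) (decode_str (ys ! 2)) = \<sigma> \<and> a * (den (ys ! 2) (ys ! 1) + 1) < b * num (ys ! 2) (ys ! 1))"
proof -
  have "computable 3 (\<lambda>ys. h (ys ! 2) (ys ! 1))" if "computable2 h" for h
    using computable_comp2[OF that[unfolded computable2_iff] computable_nth[of 2 3] computable_nth[of 1 3]]
    by simp
  with assms show ?thesis
    by (intro decidable_conj decidable_length_eq decidable_take_decode_str decidable_less
        computable_mult computable_add computable_Suc computable_nth computable_const) simp_all
qed

lemma computable_seq_if_isolated_branch:
  assumes "left_ce \<rho>" and "0 < b" and "N \<le> m"
    and heavy: "\<And>k. N \<le> k \<Longrightarrow> real a / real b < \<rho> (restr X k)"
    and unique: "\<And>k \<tau>. m \<le> k \<Longrightarrow> \<tau> \<in> extensions (restr X N) k \<Longrightarrow> real a / real b < \<rho> \<tau> \<Longrightarrow>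
      \<tau> = restr X k"
  shows "computable_seq X"
proof -
  obtain num den where num: "computable2 num" and den: "computable2 den" and
    approx: "\<And>\<sigma>. mono (\<lambda>s. real (num (code_str \<sigma>) s) / real (den (code_str \<sigma>) s + 1)) \<and>
      (\<lambda>s. real (num (code_str \<sigma>) s) / real (den (code_str \<sigma>) s + 1)) \<longlonglongrightarrow> \<rho> \<sigma>"
    using \<open>left_ce \<rho>\<close> unfolding left_ce_def Let_def by blast
  define R where "R j s \<tau> \<longleftrightarrow> length \<tau> = Suc (j + m) \<and> take (length (restr X N)) \<tau> = restr X N \<and>
      a * (den (code_str \<tau>) s + 1) < b * num (code_str \<tau>) s" for j s \<tau>
  have R_iff: "R j s \<tau> \<longleftrightarrow> \<tau> \<in> extensions (restr X N) (Suc (j + m)) \<and>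
      real a / real b < real (num (code_str \<tau>) s) / real (den (code_str \<tau>) s + 1)" for j s \<tau>
    unfolding R_def extensions_def less_frac_iff_nat[OF \<open>0 < b\<close>] by simp
  show ?thesis
  proof (rule computable_seq_by_search[of R])
    show "decidable 3 (\<lambda>ys. R (ys ! 0) (ys ! 1) (decode_str (ys ! 2)))"
      unfolding R_def code_decode_str by (rule decidable_heavy_extension[OF num den])
  next
    fix j
    let ?\<tau> = "restr X (Suc (j + m))"
    have "real a / real b < \<rho> ?\<tau>"
      using heavy \<open>N \<le> m\<close> by simp
    then have "eventually (\<lambda>s. real a / real b <
        real (num (code_str ?\<tau>) s) / real (den (code_str ?\<tau>) s + 1)) sequentially"
      using order_tendstoD(1)[OF conjunct2[OF approx]] by blast
    then obtain s where "real a / real b < real (num (code_str ?\<tau>) s) / real (den (code_str ?\<tau>) s + 1)"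
      unfolding eventually_sequentially by (meson order_refl)
    then show "\<exists>s \<tau>. R j s \<tau>"
      using restr_in_extensions[of N "Suc (j + m)" X] \<open>N \<le> m\<close> by (auto simp: R_iff)
  next
    fix j s \<tau>
    assume "R j s \<tau>"
    then have "\<tau> \<in> extensions (restr X N) (Suc (j + m))" and
      "real a / real b < real (num (code_str \<tau>) s) / real (den (code_str \<tau>) s + 1)"
      by (auto simp: R_iff)
    moreover have "real (num (code_str \<tau>) s) / real (den (code_str \<tau>) s + 1) \<le> \<rho> \<tau>"
      using approx[of \<tau>] by (auto intro: incseq_le)
    ultimately have "\<tau> = restr X (Suc (j + m))"
      by (intro unique) auto
    then show "j < length \<tau> \<and> \<tau> ! j = X j"
      by (simp add: nth_restr)
  qed
qed

lemma computable_seq_if_atom: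
  assumes "semimeasure \<rho>" and "left_ce \<rho>" and "0 < c"
    and "(\<lambda>n. rho_bar \<rho> (restr X n)) \<longlonglongrightarrow> c"
  shows "computable_seq X"
proof -
  have "0 \<le> c / 2" and "c / 2 < c" using \<open>0 < c\<close> by auto
  then obtain a b :: nat where "0 < b" and q: "c / 2 < real a / real b" "real a / real b < c"
    by (rule rational_between)
  obtain N m where "N \<le> m" and "\<And>k. N \<le> k \<Longrightarrow> real a / real b < \<rho> (restr X k)"
    and "\<And>k \<tau>. m \<le> k \<Longrightarrow> \<tau> \<in> extensions (restr X N) k \<Longrightarrow> real a / real b < \<rho> \<tau> \<Longrightarrow> \<tau> = restr X k"
    using atom_isolates_branch[OF assms(1,4) q] by blast
  then show ?thesis
    using computable_seq_if_isolated_branch[OF assms(2) \<open>0 < b\<close>] by blast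
qed

theorem proposition6p9:
  fixes X :: "nat \<Rightarrow> bool"
  shows "computable_seq X \<longleftrightarrow>
    (\<exists>\<rho>. semimeasure \<rho> \<and> left_ce \<rho> \<and>
       (\<exists>c>0. (\<lambda>n. rho_bar \<rho> (restr X n)) \<longlonglongrightarrow> c))"
proof
  assume "computable_seq X"
  then show "\<exists>\<rho>. semimeasure \<rho> \<and> left_ce \<rho> \<and> (\<exists>c>0. (\<lambda>n. rho_bar \<rho> (restr X n)) \<longlonglongrightarrow> c)"
    by (intro exI[of _ "point_mass X"] conjI semimeasure_point_mass left_ce_point_mass exI[of _ 1])
      (simp_all add: rho_bar_point_mass)
next
  assume "\<exists>\<rho>. semimeasure \<rho> \<and> left_ce \<rho> \<and> (\<exists>c>0. (\<lambda>n. rho_bar \<rho> (restr X n)) \<longlonglongrightarrow> c)"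
  then obtain \<rho> c where "semimeasure \<rho>" "left_ce \<rho>" "0 < c"
    and "(\<lambda>n. rho_bar \<rho> (restr X n)) \<longlonglongrightarrow> c"
    by blast
  then show "computable_seq X" by (rule computable_seq_if_atom)
qed

end
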